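(* Consider the setting in the context, with $V>0$. Assume the random vectors $(T_1(t),\dots,T_K(t))$ are i.i.d. over slots. Let $S^*_{tot}$ denote the maximum, over all policies choosing $T_s(t)\in[0,T_s^{\max}]$, of $\liminf_{t\to\infty}\frac1t\sum_{\tau=0}^{t-1}\mathbb E[S_{tot}(\tau)]$ subject to $\limsup_{t\to\infty}\frac1t\sum_{\tau=0}^{t-1}\mathbb E[E_k(\tau)]\le E_k^{tot}$ for all $k$. Assume there is $\epsilon>0$ and a stationary randomized policy (choosing $T_s(t)\in[0,T_s^{\max}]$ as a possibly randomized function of the current $(T_1(t),\dots,T_K(t))$ only) under which $\mathbb E[S_{tot}(t)]=S^*_{tot}$ and $\mathbb E[E_k(t)]\le E_k^{tot}-\epsilon$ for all $k$. Let the EAD-PPDU policy choose at each slot $$T_s^*(t)\in\arg\max_{0\le T_s\le T_s^{\max}}\Big\{\sum_{k=1}^K\Big(F_k(t)-\frac{Y_k(t)}{V}E_k(t)\Big)\Big\},$$ with $Y_k(0)=0$. Then under EAD-PPDU, for every $t$, $$\Delta(\mathbf Y(t))-V\,\mathbb E[S_{tot}(t)\mid\mathbf Y(t)]\le B_2-\epsilon\sum_{k=1}^KY_k(t)-VS^*_{tot},$$ and consequently $$\limsup_{T\to\infty}\frac1T\sum_{t=0}^{T-1}\sum_{k=1}^K\mathbb E[Y_k(t)]\le\frac{B_2+VK}{\epsilon},\qquad \liminf_{T\to\infty}\frac1T\sum_{t=0}^{T-1}\mathbb E[S_{tot}(t)]\ge S^*_{tot}-\frac{B_2}{V},$$ where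 $B_2=\tfrac12K\big(E_{\max}^2+(E^{tot}_{\max})^2\big)$.
   Context: At each slot $t$, each of $K$ users has a transmission duration $T_k(t)\ge0$ (time needed to empty its buffer). A scheduling duration $T_s(t)\in[0,T_s^{\max}]$ is chosen. $F_k(t)=1$ if $T_s(t)\ge T_k(t)$, else $0$; $S_{tot}(t)=\sum_{k=1}^KF_k(t)$. Each user transmits (data plus padding) at fixed power $P>0$ for the whole duration, consuming energy $E_k(t)=T_s(t)P$; $E_{\max}=T_s^{\max}P$. Energy budgets $E_k^{tot}>0$, $E^{tot}_{\max}=\max_kE_k^{tot}$. Virtual queues $Y_k(t+1)=\max\{Y_k(t)-E_k^{tot},0\}+E_k(t)$, $\mathbf Y(t)=(Y_1(t),\dots,Y_K(t))$. $L(\mathbf Y)=\tfrac12\sum_kY_k^2$, $\Delta(\mathbf Y(t))=\mathbb E[L(\mathbf Y(t+1))-L(\mathbf Y(t))\mid\mathbf Y(t)]$. *)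

theory Defs
  imports "HOL-Probability.Probability"
begin

text \<open>Users are indexed by a finite type 'k, so K = CARD('k).
  A vector of transmission durations (T_1,...,T_K) is a function 'k => real.\<close>

definition vspace :: "('k::finite \<Rightarrow> real) measure" where
  "vspace = (\<Pi>\<^sub>M k\<in>UNIV. borel)"

definition Fk :: "real \<Rightarrow> real \<Rightarrow> real" where
  "Fk ts Tk = (if ts \<ge> Tk then 1 else 0)"

definition Stot :: "real \<Rightarrow> ('k::finite \<Rightarrow> real) \<Rightarrow> real" where
  "Stot ts x = (\<Sum>k\<in>UNIV. Fk ts (x k))"

definition Lyap :: "('k::finite \<Rightarrow> real) \<Rightarrow> real" where
  "Lyap y = 1/2 * (\<Sum>k\<in>UNIV. (y k)^2)"

text \<open>EAD-PPDU per-slot objective: sum_k (F_k - Y_k/V * E_k), with E_k = ts * P.\<close>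
definition ead_obj :: "real \<Rightarrow> real \<Rightarrow> ('k::finite \<Rightarrow> real) \<Rightarrow> ('k \<Rightarrow> real) \<Rightarrow> real \<Rightarrow> real" where
  "ead_obj V P x y ts = (\<Sum>k\<in>UNIV. Fk ts (x k) - y k / V * (ts * P))"

text \<open>Virtual queues under EAD-PPDU along a realisation xs of the duration vectors;
  sel t x y is the scheduling duration chosen at slot t given durations x and queues y.\<close>
primrec ead_Y :: "real \<Rightarrow> ('k \<Rightarrow> real) \<Rightarrow> (nat \<Rightarrow> ('k \<Rightarrow> real) \<Rightarrow> ('k \<Rightarrow> real) \<Rightarrow> real)
    \<Rightarrow> (nat \<Rightarrow> 'k \<Rightarrow> real) \<Rightarrow> nat \<Rightarrow> 'k \<Rightarrow> real" where
  "ead_Y P Etot sel xs 0 = (\<lambda>k. 0)"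
| "ead_Y P Etot sel xs (Suc t) =
     (\<lambda>k. max (ead_Y P Etot sel xs t k - Etot k) 0 + sel t (xs t) (ead_Y P Etot sel xs t) * P)"

definition is_policy :: "'a measure \<Rightarrow> real \<Rightarrow> (nat \<Rightarrow> 'a \<Rightarrow> real) \<Rightarrow> bool" where
  "is_policy M Tmax Ts \<longleftrightarrow>
     (\<forall>t. Ts t \<in> borel_measurable M \<and> (\<forall>\<omega>\<in>space M. 0 \<le> Ts t \<omega> \<and> Ts t \<omega> \<le> Tmax))"

definition opt_Stot :: "'a measure \<Rightarrow> (nat \<Rightarrow> 'a \<Rightarrow> ('k::finite \<Rightarrow> real)) \<Rightarrow> real \<Rightarrow> real
    \<Rightarrow> ('k \<Rightarrow> real) \<Rightarrow> ereal" where
  "opt_Stot M X P Tmax Etot =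
     Sup {liminf (\<lambda>t. ereal (1 / real t * (\<Sum>\<tau><t. (\<integral>\<omega>. Stot (Ts \<tau> \<omega>) (X \<tau> \<omega>) \<partial>M)))) | Ts.
            is_policy M Tmax Ts \<and>
            (\<forall>k. limsup (\<lambda>t. ereal (1 / real t * (\<Sum>\<tau><t. (\<integral>\<omega>. Ts \<tau> \<omega> * P \<partial>M))))
                   \<le> ereal (Etot k))}"

end

theory Submission
  imports Defs
begin

text \<open>Squaring the virtual-queue update bounds the Lyapunov drift plus penalty of a slot by a
  constant plus a term that depends on the chosen duration T_s only through the per-slot objective of
  EAD-PPDU. Since EAD-PPDU maximises that objective, its choice can be replaced in the bound by a draw
  from the stationary randomized policy. The queues Y(t) are built from past durations only, so they
  are independent of the current durations; conditioning on Y(t) therefore averages the stationary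
  policy's service to S*_tot and its energy to at most E_k^tot - \<epsilon>. Taking expectations and
  telescoping over slots yields both time-average bounds.\<close>

lemma space_vspace [simp]: "space vspace = UNIV"
  by (simp add: vspace_def space_PiM)

lemma vspace_component_measurable [measurable]: "(\<lambda>x. x k) \<in> borel_measurable vspace"
  unfolding vspace_def by measurable

lemma Stot_measurable [measurable]: "(\<lambda>(x, ts). Stot ts x) \<in> borel_measurable (vspace \<Otimes>\<^sub>M borel)"
  unfolding Stot_def Fk_def by measurable

lemma Lyap_measurable [measurable]: "Lyap \<in> borel_measurable vspace"
  unfolding Lyap_def by measurable

lemma Stot_nonneg: "0 \<le> Stot ts x"
  unfolding Stot_def Fk_def by (simp add: sum_nonneg)

lemma Stot_le_card: "Stot ts (x :: 'k::finite \<Rightarrow> real) \<le> real CARD('k)"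
proof -
  have "Stot ts x \<le> (\<Sum>k\<in>(UNIV :: 'k set). 1)"
    unfolding Stot_def Fk_def by (intro sum_mono) simp
  then show ?thesis by simp
qed

lemma ead_obj_scaled:
  assumes "V \<noteq> 0"
  shows "V * ead_obj V P x y ts = V * Stot ts x - (\<Sum>k\<in>UNIV. y k) * (ts * P)"
  using assms unfolding ead_obj_def Stot_def
  by (simp add: sum_subtractf sum_distrib_left sum_distrib_right right_diff_distrib)

lemma square_drift_le:
  fixes y E e :: real
  assumes "0 \<le> y" "0 \<le> e" "0 \<le> E"
  shows "(max (y - E) 0 + e)\<^sup>2 - y\<^sup>2 \<le> E\<^sup>2 + e\<^sup>2 - 2 * y * (E - e)"
proof (cases "E \<le> y")
  case True
  then show ?thesis using assms by (simp add: power2_eq_square algebra_simps)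
next
  case False
  have "0 \<le> (y - E)\<^sup>2 + 2 * y * e" using assms by simp
  then show ?thesis using False by (simp add: power2_eq_square algebra_simps)
qed

lemma Lyap_queue_update_le:
  fixes y Etot :: "'k::finite \<Rightarrow> real"
  assumes "\<And>k. 0 \<le> y k" "\<And>k. 0 \<le> Etot k" "0 \<le> e" "e \<le> Emax"
  shows "Lyap (\<lambda>k. max (y k - Etot k) 0 + e) - Lyap y
    \<le> 1/2 * real CARD('k) * (Emax\<^sup>2 + (Max (range Etot))\<^sup>2)
       - (\<Sum>k\<in>UNIV. y k * Etot k) + (\<Sum>k\<in>UNIV. y k) * e"
proof -
  have sq_le: "(Etot k)\<^sup>2 + e\<^sup>2 \<le> Emax\<^sup>2 + (Max (range Etot))\<^sup>2" for k
  proof -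
    have "Etot k \<le> Max (range Etot)" by simp
    then have "(Etot k)\<^sup>2 \<le> (Max (range Etot))\<^sup>2" using assms by (intro power_mono) auto
    moreover have "e\<^sup>2 \<le> Emax\<^sup>2" using assms by (intro power_mono) auto
    ultimately show ?thesis by linarith
  qed
  have "Lyap (\<lambda>k. max (y k - Etot k) 0 + e) - Lyap y
      = 1/2 * (\<Sum>k\<in>UNIV. (max (y k - Etot k) 0 + e)\<^sup>2 - (y k)\<^sup>2)"
    unfolding Lyap_def by (simp add: sum_subtractf algebra_simps)
  also have "\<dots> \<le> 1/2 * (\<Sum>k\<in>UNIV. (Etot k)\<^sup>2 + e\<^sup>2 - 2 * y k * (Etot k - e))"
    using assms by (intro mult_left_mono sum_mono square_drift_le) auto
  also have "\<dots> = 1/2 * (\<Sum>k\<in>UNIV. (Etot k)\<^sup>2 + e\<^sup>2) - (\<Sum>k\<in>UNIV. y k * Etot k) + (\<Sum>k\<in>UNIV. y k) * e"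
    by (simp add: sum_subtractf sum.distrib sum_distrib_left sum_distrib_right algebra_simps)
  also have "1/2 * (\<Sum>k\<in>UNIV. (Etot k)\<^sup>2 + e\<^sup>2) \<le> 1/2 * (\<Sum>k\<in>(UNIV :: 'k set). Emax\<^sup>2 + (Max (range Etot))\<^sup>2)"
    by (intro mult_left_mono sum_mono sq_le) auto
  finally show ?thesis by simp
qed

lemma ead_Y_nonneg:
  assumes "\<And>t x y. 0 \<le> sel t x y" "0 \<le> P"
  shows "0 \<le> ead_Y P Etot sel xs t k"
  by (induction t) (auto intro!: add_nonneg_nonneg mult_nonneg_nonneg assms)

lemma ead_Y_le:
  assumes "\<And>t x y. 0 \<le> sel t x y \<and> sel t x y \<le> Tmax" "0 \<le> P" "\<And>k. 0 \<le> Etot k"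
  shows "ead_Y P Etot sel xs t k \<le> real t * (Tmax * P)"
proof (induction t)
  case (Suc t)
  have "0 \<le> ead_Y P Etot sel xs t k" using ead_Y_nonneg[of sel P] assms by auto
  moreover have "sel t (xs t) (ead_Y P Etot sel xs t) * P \<le> Tmax * P"
    using assms by (intro mult_right_mono) auto
  ultimately show ?case using Suc assms(3)[of k] by (auto simp: algebra_simps)
qed simp

lemma ead_Y_cong:
  "(\<And>s. s < t \<Longrightarrow> xs s = xs' s) \<Longrightarrow> ead_Y P Etot sel xs t = ead_Y P Etot sel xs' t"
  by (induction t) auto

lemma ead_Y_measurable_PiM:
  assumes sel_meas [measurable]: "\<And>t. (\<lambda>(x, y). sel t x y) \<in> borel_measurable (vspace \<Otimes>\<^sub>M vspace)"
  shows "n \<le> t \<Longrightarrow> (\<lambda>z. ead_Y P Etot sel z n) \<in> PiM {..<t} (\<lambda>_. vspace) \<rightarrow>\<^sub>M (vspace :: ('k::finite \<Rightarrow> real) measure)"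
proof (induction n)
  case 0
  then show ?case by (simp add: vspace_def space_PiM)
next
  case (Suc n)
  then have [measurable]: "(\<lambda>z. ead_Y P Etot sel z n) \<in> PiM {..<t} (\<lambda>_. vspace) \<rightarrow>\<^sub>M vspace"
    by simp
  have [measurable]: "(\<lambda>z. z n) \<in> PiM {..<t} (\<lambda>_. vspace) \<rightarrow>\<^sub>M (vspace :: ('k \<Rightarrow> real) measure)"
    using Suc by (intro measurable_component_singleton) auto
  have "(\<lambda>z. sel n (z n) (ead_Y P Etot sel z n)) \<in> borel_measurable (PiM {..<t} (\<lambda>_. vspace))"
    using measurable_compose[OF measurable_Pair sel_meas[of n]] by simp
  then show ?case
    unfolding vspace_def by (intro measurable_PiM_single') (auto simp: vspace_def[symmetric])
qed

lemma (in prob_space) indep_var_ead_Y: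
  assumes X_meas: "\<And>t. X t \<in> M \<rightarrow>\<^sub>M vspace"
    and X_indep: "indep_vars (\<lambda>_. vspace) X UNIV"
    and sel_meas: "\<And>t. (\<lambda>(x, y). sel t x y) \<in> borel_measurable (vspace \<Otimes>\<^sub>M vspace)"
  shows "indep_var vspace (\<lambda>\<omega>. ead_Y P Etot sel (\<lambda>s. X s \<omega>) t) vspace (X t)"
proof -
  have "indep_var (PiM {..<t} (\<lambda>_. vspace)) (\<lambda>\<omega>. restrict (\<lambda>s. X s \<omega>) {..<t})
      (PiM {t} (\<lambda>_. vspace)) (\<lambda>\<omega>. restrict (\<lambda>s. X s \<omega>) {t})"
    by (rule indep_var_restrict[OF X_indep]) auto
  then have "indep_var vspace ((\<lambda>z. ead_Y P Etot sel z t) \<circ> (\<lambda>\<omega>. restrict (\<lambda>s. X s \<omega>) {..<t}))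
      vspace ((\<lambda>z. z t) \<circ> (\<lambda>\<omega>. restrict (\<lambda>s. X s \<omega>) {t}))"
    by (rule indep_var_compose)
       (auto intro: ead_Y_measurable_PiM[OF sel_meas] measurable_component_singleton)
  moreover have "(\<lambda>z. ead_Y P Etot sel z t) \<circ> (\<lambda>\<omega>. restrict (\<lambda>s. X s \<omega>) {..<t})
      = (\<lambda>\<omega>. ead_Y P Etot sel (\<lambda>s. X s \<omega>) t)"
    unfolding comp_def by (rule ext, rule ead_Y_cong) simp
  ultimately show ?thesis by (simp add: comp_def)
qed

lemma (in prob_space) real_cond_exp_indep_mult:
  assumes indep: "indep_var N Z N' W"
    and [measurable]: "\<psi> \<in> borel_measurable N" "\<phi> \<in> borel_measurable N'"
    and int_\<psi>: "integrable M (\<lambda>\<omega>. \<psi> (Z \<omega>))" and int_\<phi>: "integrable M (\<lambda>\<omega>. \<phi> (W \<omega>))"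
  shows "AE \<omega> in M. real_cond_exp M (vimage_algebra (space M) Z N) (\<lambda>\<omega>. \<psi> (Z \<omega>) * \<phi> (W \<omega>)) \<omega>
      = \<psi> (Z \<omega>) * (\<integral>\<omega>. \<phi> (W \<omega>) \<partial>M)"
proof -
  have Z [measurable]: "Z \<in> M \<rightarrow>\<^sub>M N" and [measurable]: "W \<in> M \<rightarrow>\<^sub>M N'"
    using indep_var_rv1[OF indep] indep_var_rv2[OF indep] by auto
  define F where "F = vimage_algebra (space M) Z N"
  interpret F: finite_measure_subalgebra M F
    unfolding F_def
    by (intro finite_measure_subalgebra.intro finite_measure_subalgebra_axioms.intro finite_measure_axioms)
       (simp add: subalgebra_def sets_image_in_sets[OF refl Z])
  have indep_borel: "indep_var borel (\<lambda>\<omega>. f (Z \<omega>)) borel (\<lambda>\<omega>. \<phi> (W \<omega>))"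
    if "f \<in> borel_measurable N" for f
    using indep_var_compose[OF indep that, of \<phi>] by (simp add: comp_def)
  have "AE \<omega> in M. real_cond_exp M F (\<lambda>\<omega>. \<psi> (Z \<omega>) * \<phi> (W \<omega>)) \<omega> = \<psi> (Z \<omega>) * (\<integral>\<omega>. \<phi> (W \<omega>) \<partial>M)"
  proof (rule F.real_cond_exp_charact)
    fix A assume "A \<in> sets F"
    then obtain B where B [measurable]: "B \<in> sets N" and A: "A = Z -` B \<inter> space M"
      using sets_vimage_algebra2[of Z "space M" N] measurable_space[OF Z] unfolding F_def by auto
    have int_B\<psi>: "integrable M (\<lambda>\<omega>. indicator B (Z \<omega>) * \<psi> (Z \<omega>))"
    proof -
      have "integrable M (\<lambda>\<omega>. indicator (Z -` B \<inter> space M) \<omega> * \<psi> (Z \<omega>))"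
        using integrable_mult_indicator[OF _ int_\<psi>] by simp
      moreover have "integrable M (\<lambda>\<omega>. indicator (Z -` B \<inter> space M) \<omega> * \<psi> (Z \<omega>))
          \<longleftrightarrow> integrable M (\<lambda>\<omega>. indicator B (Z \<omega>) * \<psi> (Z \<omega>))"
        by (rule Bochner_Integration.integrable_cong) (auto simp: indicator_def)
      ultimately show ?thesis by simp
    qed
    have "(\<integral>\<omega>\<in>A. \<psi> (Z \<omega>) * \<phi> (W \<omega>) \<partial>M) = (\<integral>\<omega>. (indicator B (Z \<omega>) * \<psi> (Z \<omega>)) * \<phi> (W \<omega>) \<partial>M)"
      unfolding A set_lebesgue_integral_def by (intro Bochner_Integration.integral_cong) (auto simp: indicator_def)
    also have "\<dots> = (\<integral>\<omega>. indicator B (Z \<omega>) * \<psi> (Z \<omega>) \<partial>M) * (\<integral>\<omega>. \<phi> (W \<omega>) \<partial>M)"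
      by (rule indep_var_lebesgue_integral[OF indep_borel int_B\<psi> int_\<phi>]) measurable
    also have "\<dots> = (\<integral>\<omega>. indicator B (Z \<omega>) * \<psi> (Z \<omega>) * (\<integral>\<omega>. \<phi> (W \<omega>) \<partial>M) \<partial>M)"
      by simp
    also have "\<dots> = (\<integral>\<omega>\<in>A. \<psi> (Z \<omega>) * (\<integral>\<omega>. \<phi> (W \<omega>) \<partial>M) \<partial>M)"
      unfolding A set_lebesgue_integral_def
      by (intro Bochner_Integration.integral_cong) (auto simp: indicator_def)
    finally show "(\<integral>\<omega>\<in>A. \<psi> (Z \<omega>) * \<phi> (W \<omega>) \<partial>M) = (\<integral>\<omega>\<in>A. \<psi> (Z \<omega>) * (\<integral>\<omega>. \<phi> (W \<omega>) \<partial>M) \<partial>M)" .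
  next
    show "integrable M (\<lambda>\<omega>. \<psi> (Z \<omega>) * \<phi> (W \<omega>))"
      by (rule indep_var_integrable[OF indep_borel int_\<psi> int_\<phi>]) measurable
    show "integrable M (\<lambda>\<omega>. \<psi> (Z \<omega>) * (\<integral>\<omega>. \<phi> (W \<omega>) \<partial>M))"
      using int_\<psi> by simp
    have "Z \<in> F \<rightarrow>\<^sub>M N"
      unfolding F_def by (rule measurable_vimage_algebra1) (use measurable_space[OF Z] in auto)
    then show "(\<lambda>\<omega>. \<psi> (Z \<omega>) * (\<integral>\<omega>. \<phi> (W \<omega>) \<partial>M)) \<in> borel_measurable F"
      by measurable
  qed
  then show ?thesis unfolding F_def .
qed

lemma integral_measurable_subprob_algebra_nonneg:
  fixes f :: "'a \<Rightarrow> 'b \<Rightarrow> real"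
  assumes f [measurable]: "(\<lambda>(x, y). f x y) \<in> borel_measurable (M \<Otimes>\<^sub>M N)"
    and L [measurable]: "L \<in> M \<rightarrow>\<^sub>M subprob_algebra N"
    and nonneg: "\<And>x y. 0 \<le> f x y"
  shows "(\<lambda>x. \<integral>y. f x y \<partial>L x) \<in> borel_measurable M"
proof -
  have "(\<lambda>x. enn2real (\<integral>\<^sup>+y. ennreal (f x y) \<partial>L x)) \<in> borel_measurable M"
    by (intro borel_measurable_enn2real nn_integral_measurable_subprob_algebra2[OF _ L]) measurable
  moreover have "(\<integral>y. f x y \<partial>L x) = enn2real (\<integral>\<^sup>+y. ennreal (f x y) \<partial>L x)" if "x \<in> space M" for x
  proof (rule integral_eq_nn_integral)
    have "(\<lambda>y. f x y) \<in> borel_measurable N"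
      using measurable_compose[OF measurable_Pair1'[OF that] f] by simp
    then show "(\<lambda>y. f x y) \<in> borel_measurable (L x)"
      by (simp add: subprob_measurableD(3)[OF L that])
  qed (simp add: nonneg)
  ultimately show ?thesis by (simp cong: measurable_cong)
qed

lemma randomized_choice_le_ead_maximizer:
  fixes x y :: "'k::finite \<Rightarrow> real"
  assumes N: "prob_space N" and sets_N: "sets N = sets borel"
    and range: "AE ts in N. 0 \<le> ts \<and> ts \<le> Tmax" and "V > 0" "P \<ge> 0"
    and max: "\<And>ts. 0 \<le> ts \<Longrightarrow> ts \<le> Tmax \<Longrightarrow> ead_obj V P x y ts \<le> ead_obj V P x y s"
  shows "V * (\<integral>ts. Stot ts x \<partial>N) - (\<Sum>k\<in>UNIV. y k) * (\<integral>ts. ts * P \<partial>N)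
    \<le> V * Stot s x - (\<Sum>k\<in>UNIV. y k) * (s * P)"
proof -
  interpret prob_space N by (rule N)
  have "(\<lambda>ts. Stot ts x) \<in> borel_measurable N"
    unfolding measurable_cong_sets[OF sets_N refl] Stot_def Fk_def by measurable
  then have int_Stot: "integrable N (\<lambda>ts. Stot ts x)"
    by (intro integrable_const_bound[where B="real CARD('k)"]) (auto simp: Stot_nonneg Stot_le_card)
  have "AE ts in N. norm (ts * P) \<le> Tmax * P"
    using range by eventually_elim (use \<open>P \<ge> 0\<close> in \<open>auto simp: abs_mult intro: mult_right_mono\<close>)
  moreover have "(\<lambda>ts. ts * P) \<in> borel_measurable N"
    unfolding measurable_cong_sets[OF sets_N refl] by measurable
  ultimately have int_energy: "integrable N (\<lambda>ts. ts * P)"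
    by (intro integrable_const_bound)
  have "AE ts in N. V * Stot ts x - (\<Sum>k\<in>UNIV. y k) * (ts * P) \<le> V * Stot s x - (\<Sum>k\<in>UNIV. y k) * (s * P)"
    using range
  proof eventually_elim
    case (elim ts)
    then show ?case
      using mult_left_mono[OF max, of ts V] \<open>V > 0\<close> by (simp add: ead_obj_scaled)
  qed
  then have "(\<integral>ts. V * Stot ts x - (\<Sum>k\<in>UNIV. y k) * (ts * P) \<partial>N) \<le> V * Stot s x - (\<Sum>k\<in>UNIV. y k) * (s * P)"
    using int_Stot int_energy by (intro integral_le_const) auto
  then show ?thesis using int_Stot int_energy by simp
qed

lemma drift_plus_penalty_time_averages:
  fixes L p q :: "nat \<Rightarrow> real"
  assumes L0: "L 0 = 0" and L_nonneg: "\<And>t. 0 \<le> L t"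
    and drift: "\<And>t. L (Suc t) - L t - V * p t \<le> B - \<epsilon> * q t - V * c"
    and p_le: "\<And>t. p t \<le> pmax" and q_nonneg: "\<And>t. 0 \<le> q t"
    and "0 < V" "0 < \<epsilon>" "0 \<le> c"
  shows "limsup (\<lambda>T. ereal (1 / real T * (\<Sum>t<T. q t))) \<le> ereal ((B + V * pmax) / \<epsilon>)"
    and "ereal c - ereal (B / V) \<le> liminf (\<lambda>T. ereal (1 / real T * (\<Sum>t<T. p t)))"
proof -
  have telescope: "L T - V * (\<Sum>t<T. p t) \<le> real T * B - \<epsilon> * (\<Sum>t<T. q t) - real T * V * c" for T
  proof -
    have "L T - V * (\<Sum>t<T. p t) = (\<Sum>t<T. L (Suc t) - L t - V * p t)"
      using sum_lessThan_telescope[of L T] L0 by (simp add: sum_subtractf sum_distrib_left)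
    also have "\<dots> \<le> (\<Sum>t<T. B - \<epsilon> * q t - V * c)"
      by (intro sum_mono drift)
    finally show ?thesis by (simp add: sum_subtractf sum_distrib_left)
  qed
  have "1 / real T * (\<Sum>t<T. q t) \<le> (B + V * pmax) / \<epsilon>" if "T > 0" for T
  proof -
    have "V * (\<Sum>t<T. p t) \<le> V * (real T * pmax)"
      using sum_mono[of "{..<T}" p "\<lambda>_. pmax"] p_le \<open>0 < V\<close> by simp
    moreover have "0 \<le> real T * V * c" using \<open>0 < V\<close> \<open>0 \<le> c\<close> by simp
    ultimately have "\<epsilon> * (\<Sum>t<T. q t) \<le> real T * (B + V * pmax)"
      using telescope[of T] L_nonneg[of T] by (simp add: algebra_simps)
    then show ?thesis using that \<open>0 < \<epsilon>\<close> by (simp add: field_simps)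
  qed
  then show "limsup (\<lambda>T. ereal (1 / real T * (\<Sum>t<T. q t))) \<le> ereal ((B + V * pmax) / \<epsilon>)"
    by (intro Limsup_bounded eventually_sequentiallyI[of 1]) auto
  have "c - B / V \<le> 1 / real T * (\<Sum>t<T. p t)" if "T > 0" for T
  proof -
    have "0 \<le> \<epsilon> * (\<Sum>t<T. q t)" using q_nonneg \<open>0 < \<epsilon>\<close> by (simp add: sum_nonneg)
    then have "real T * V * c - real T * B \<le> V * (\<Sum>t<T. p t)"
      using telescope[of T] L_nonneg[of T] by simp
    then show ?thesis using that \<open>0 < V\<close> by (simp add: field_simps)
  qed
  then show "ereal c - ereal (B / V) \<le> liminf (\<lambda>T. ereal (1 / real T * (\<Sum>t<T. p t)))"
    by (intro Liminf_bounded eventually_sequentiallyI[of 1]) auto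
qed

lemma (in finite_measure) integrable_bounded:
  fixes f :: "'a \<Rightarrow> real"
  assumes "f \<in> borel_measurable M" "\<And>\<omega>. \<bar>f \<omega>\<bar> \<le> B"
  shows "integrable M f"
  by (rule integrable_const_bound[where B=B]) (use assms in auto)

text \<open>In the paper's notation, \<open>queue t\<close> is Y(t), \<open>drift_const\<close> is B_2, and
  \<open>opt_service\<close> is S*_tot, the expected service of the stationary policy \<open>\<kappa>\<close>.\<close>

locale ead_ppdu = prob_space M
  for M :: "'a measure"
    and X :: "nat \<Rightarrow> 'a \<Rightarrow> ('k::finite \<Rightarrow> real)"
    and D :: "('k \<Rightarrow> real) measure"
    and P V Tmax \<epsilon> :: real
    and Etot :: "'k \<Rightarrow> real"
    and \<kappa> :: "('k \<Rightarrow> real) \<Rightarrow> real measure"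
    and sel :: "nat \<Rightarrow> ('k \<Rightarrow> real) \<Rightarrow> ('k \<Rightarrow> real) \<Rightarrow> real" +
  assumes X_meas [measurable]: "\<And>t. X t \<in> M \<rightarrow>\<^sub>M vspace"
    and X_indep: "indep_vars (\<lambda>_. vspace) X UNIV"
    and X_distr: "\<And>t. distr M vspace (X t) = D"
    and V: "V > 0" and P: "P > 0" and Etot: "\<And>k. Etot k > 0" and eps: "\<epsilon> > 0"
    and \<kappa>_meas: "\<kappa> \<in> D \<rightarrow>\<^sub>M prob_algebra borel"
    and \<kappa>_range: "\<And>x. AE ts in \<kappa> x. 0 \<le> ts \<and> ts \<le> Tmax"
    and stat_energy_le: "\<And>k. (\<integral>x. (\<integral>ts. ts * P \<partial>\<kappa> x) \<partial>D) \<le> Etot k - \<epsilon>"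
    and sel_range: "\<And>t x y. 0 \<le> sel t x y \<and> sel t x y \<le> Tmax"
    and sel_max: "\<And>t x y ts. 0 \<le> ts \<Longrightarrow> ts \<le> Tmax \<Longrightarrow> ead_obj V P x y ts \<le> ead_obj V P x y (sel t x y)"
    and sel_meas [measurable]: "\<And>t. (\<lambda>(x, y). sel t x y) \<in> borel_measurable (vspace \<Otimes>\<^sub>M vspace)"
begin

definition queue :: "nat \<Rightarrow> 'a \<Rightarrow> 'k \<Rightarrow> real" where
  "queue t \<omega> = ead_Y P Etot sel (\<lambda>s. X s \<omega>) t"

abbreviation service :: "nat \<Rightarrow> 'a \<Rightarrow> real" where
  "service t \<omega> \<equiv> Stot (sel t (X t \<omega>) (queue t \<omega>)) (X t \<omega>)"

definition drift_const :: real where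
  "drift_const = 1/2 * real CARD('k) * ((Tmax * P)\<^sup>2 + (Max (range Etot))\<^sup>2)"

definition stat_service :: "('k \<Rightarrow> real) \<Rightarrow> real" where
  "stat_service x = (\<integral>ts. Stot ts x \<partial>\<kappa> x)"

definition stat_energy :: "('k \<Rightarrow> real) \<Rightarrow> real" where
  "stat_energy x = (\<integral>ts. ts * P \<partial>\<kappa> x)"

definition opt_service :: real where
  "opt_service = (\<integral>x. stat_service x \<partial>D)"

definition mean_stat_energy :: real where
  "mean_stat_energy = (\<integral>x. stat_energy x \<partial>D)"

lemma Tmax_nonneg: "0 \<le> Tmax"
  using sel_range by (meson order_trans)

lemma sets_D: "sets D = sets vspace"
  using X_distr[of 0] by (metis sets_distr)

lemma integral_X_eq:
  fixes f :: "('k \<Rightarrow> real) \<Rightarrow> real"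
  assumes "f \<in> borel_measurable vspace"
  shows "(\<integral>\<omega>. f (X t \<omega>) \<partial>M) = (\<integral>x. f x \<partial>D)"
  using integral_distr[OF X_meas[of t] assms] X_distr[of t] by simp

lemma \<kappa>_subprob [measurable]: "\<kappa> \<in> vspace \<rightarrow>\<^sub>M subprob_algebra borel"
  using measurable_prob_algebraD[OF \<kappa>_meas] by (simp add: measurable_cong_sets[OF sets_D refl])

lemma prob_space_\<kappa>: "prob_space (\<kappa> x)" and sets_\<kappa>: "sets (\<kappa> x) = sets borel"
  using measurable_space[OF \<kappa>_meas, of x] sets_eq_imp_space_eq[OF sets_D]
  by (auto simp: space_prob_algebra)

lemma stat_service_measurable [measurable]: "stat_service \<in> borel_measurable vspace"
  unfolding stat_service_def
  by (rule integral_measurable_subprob_algebra_nonneg[OF _ \<kappa>_subprob]) (auto simp: Stot_nonneg)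

lemma stat_energy_measurable [measurable]: "stat_energy \<in> borel_measurable vspace"
  unfolding stat_energy_def
  by (rule measurable_compose[OF \<kappa>_subprob integral_measurable_subprob_algebra]) measurable

lemma stat_service_bounds: "0 \<le> stat_service x" "stat_service x \<le> real CARD('k)"
proof -
  interpret K: prob_space "\<kappa> x" by (rule prob_space_\<kappa>)
  have "(\<lambda>ts. Stot ts x) \<in> borel_measurable (\<kappa> x)"
    unfolding measurable_cong_sets[OF sets_\<kappa> refl] Stot_def Fk_def by measurable
  then have "integrable (\<kappa> x) (\<lambda>ts. Stot ts x)"
    by (intro K.integrable_const_bound[where B="real CARD('k)"]) (auto simp: Stot_nonneg Stot_le_card)
  then show "0 \<le> stat_service x" "stat_service x \<le> real CARD('k)"
    unfolding stat_service_def
    by (auto intro!: K.integral_ge_const K.integral_le_const simp: Stot_nonneg Stot_le_card)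
qed

lemma stat_energy_bounds: "0 \<le> stat_energy x" "stat_energy x \<le> Tmax * P"
proof -
  interpret K: prob_space "\<kappa> x" by (rule prob_space_\<kappa>)
  have range: "AE ts in \<kappa> x. 0 \<le> ts * P \<and> ts * P \<le> Tmax * P"
    using \<kappa>_range[of x] by eventually_elim (use P in \<open>auto intro: mult_right_mono\<close>)
  moreover have "(\<lambda>ts. ts * P) \<in> borel_measurable (\<kappa> x)"
    unfolding measurable_cong_sets[OF sets_\<kappa> refl] by measurable
  ultimately have int: "integrable (\<kappa> x) (\<lambda>ts. ts * P)"
    by (intro K.integrable_const_bound[where B="Tmax * P"]) (auto elim: AE_mp)
  have "AE ts in \<kappa> x. 0 \<le> ts * P" "AE ts in \<kappa> x. ts * P \<le> Tmax * P"
    using range by (auto elim: eventually_mono)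
  from K.integral_ge_const[OF int this(1)] K.integral_le_const[OF int this(2)]
  show "0 \<le> stat_energy x" "stat_energy x \<le> Tmax * P"
    unfolding stat_energy_def .
qed

lemma mean_stat_energy_le: "mean_stat_energy \<le> Etot k - \<epsilon>"
  using stat_energy_le unfolding mean_stat_energy_def stat_energy_def .

lemma queue_nonneg: "0 \<le> queue t \<omega> k"
  unfolding queue_def by (rule ead_Y_nonneg) (use sel_range P in auto)

lemma queue_le: "queue t \<omega> k \<le> real t * (Tmax * P)"
  unfolding queue_def by (rule ead_Y_le) (use sel_range P Etot in \<open>auto intro: less_imp_le\<close>)

lemma queue_Suc:
  "queue (Suc t) \<omega> = (\<lambda>k. max (queue t \<omega> k - Etot k) 0 + sel t (X t \<omega>) (queue t \<omega>) * P)"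
  by (simp add: queue_def)

lemma indep_queue_X: "indep_var vspace (queue t) vspace (X t)"
  using indep_var_ead_Y[OF X_meas X_indep sel_meas] by (simp add: queue_def[abs_def])

lemma queue_measurable [measurable]: "queue t \<in> M \<rightarrow>\<^sub>M vspace"
  using indep_var_rv1[OF indep_queue_X] .

lemma integrable_queue: "integrable M (\<lambda>\<omega>. queue t \<omega> k)"
  by (rule integrable_bounded[where B="real t * (Tmax * P)"])
     (use queue_nonneg queue_le in \<open>auto simp: abs_of_nonneg\<close>)

lemma integrable_Lyap_queue: "integrable M (\<lambda>\<omega>. Lyap (queue t \<omega>))"
proof (rule integrable_bounded[where B="1/2 * real CARD('k) * (real t * (Tmax * P))\<^sup>2"])
  fix \<omega>
  have "(\<Sum>k\<in>UNIV. (queue t \<omega> k)\<^sup>2) \<le> (\<Sum>k\<in>(UNIV :: 'k set). (real t * (Tmax * P))\<^sup>2)"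
    by (intro sum_mono power_mono queue_le queue_nonneg)
  then show "\<bar>Lyap (queue t \<omega>)\<bar> \<le> 1/2 * real CARD('k) * (real t * (Tmax * P))\<^sup>2"
    unfolding Lyap_def by (simp add: sum_nonneg)
qed measurable

lemma integrable_service: "integrable M (service t)"
  by (rule integrable_bounded[where B="real CARD('k)"]) (auto simp: Stot_nonneg Stot_le_card)

lemma integrable_stat_service_X: "integrable M (\<lambda>\<omega>. stat_service (X t \<omega>))"
  by (rule integrable_bounded[where B="real CARD('k)"]) (auto simp: stat_service_bounds abs_le_iff)

lemma integrable_stat_energy_X: "integrable M (\<lambda>\<omega>. stat_energy (X t \<omega>))"
  by (rule integrable_bounded[where B="Tmax * P"]) (simp_all add: stat_energy_bounds)

lemma integrable_queue_stat_energy: "integrable M (\<lambda>\<omega>. queue t \<omega> k * stat_energy (X t \<omega>))"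
  by (rule integrable_bounded[where B="real t * (Tmax * P) * (Tmax * P)"])
     (auto simp: abs_mult queue_nonneg stat_energy_bounds Tmax_nonneg P less_imp_le intro!: mult_mono queue_le)

lemma finite_measure_subalgebra_queue:
  "finite_measure_subalgebra M (vimage_algebra (space M) (queue t) vspace)"
  by (intro finite_measure_subalgebra.intro finite_measure_subalgebra_axioms.intro finite_measure_axioms)
     (simp add: subalgebra_def sets_image_in_sets)

lemma drift_plus_penalty_le_stationary:
  "Lyap (queue (Suc t) \<omega>) - Lyap (queue t \<omega>) - V * service t \<omega>
    \<le> drift_const - (\<Sum>k\<in>UNIV. queue t \<omega> k * Etot k)
       - V * stat_service (X t \<omega>) + (\<Sum>k\<in>UNIV. queue t \<omega> k) * stat_energy (X t \<omega>)"
proof -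
  let ?y = "queue t \<omega>" and ?s = "sel t (X t \<omega>) (queue t \<omega>)"
  have "Lyap (queue (Suc t) \<omega>) - Lyap ?y
      \<le> drift_const - (\<Sum>k\<in>UNIV. ?y k * Etot k) + (\<Sum>k\<in>UNIV. ?y k) * (?s * P)"
    unfolding queue_Suc drift_const_def
    by (rule Lyap_queue_update_le)
       (use queue_nonneg Etot sel_range P in \<open>auto intro: less_imp_le mult_right_mono\<close>)
  moreover have "V * stat_service (X t \<omega>) - (\<Sum>k\<in>UNIV. ?y k) * stat_energy (X t \<omega>)
      \<le> V * Stot ?s (X t \<omega>) - (\<Sum>k\<in>UNIV. ?y k) * (?s * P)"
    unfolding stat_service_def stat_energy_def
    by (rule randomized_choice_le_ead_maximizer[OF prob_space_\<kappa> sets_\<kappa> \<kappa>_range V])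
       (use P sel_max in auto)
  ultimately show ?thesis by simp
qed

lemma real_cond_exp_stationary_bound:
  "AE \<omega> in M. real_cond_exp M (vimage_algebra (space M) (queue t) vspace)
      (\<lambda>\<omega>. drift_const - (\<Sum>k\<in>UNIV. queue t \<omega> k * Etot k)
         - V * stat_service (X t \<omega>) + (\<Sum>k\<in>UNIV. queue t \<omega> k * stat_energy (X t \<omega>))) \<omega>
    = drift_const - (\<Sum>k\<in>UNIV. queue t \<omega> k * Etot k)
         - V * opt_service + (\<Sum>k\<in>UNIV. queue t \<omega> k * mean_stat_energy)"
proof -
  define F where "F = vimage_algebra (space M) (queue t) vspace"
  interpret F: finite_measure_subalgebra M F
    unfolding F_def by (rule finite_measure_subalgebra_queue)
  define c where "c \<omega> = drift_const - (\<Sum>k\<in>UNIV. queue t \<omega> k * Etot k)" for \<omega>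
  have int_c: "integrable M c"
    unfolding c_def using integrable_queue by auto
  have [measurable]: "queue t \<in> F \<rightarrow>\<^sub>M vspace"
    unfolding F_def by (rule measurable_vimage_algebra1) simp
  have "AE \<omega> in M. real_cond_exp M F c \<omega> = c \<omega>"
    by (rule F.real_cond_exp_F_meas[OF int_c]) (unfold c_def, measurable)
  moreover have "AE \<omega> in M. real_cond_exp M F (\<lambda>\<omega>. 1 * stat_service (X t \<omega>)) \<omega> = 1 * opt_service"
    unfolding F_def opt_service_def integral_X_eq[OF stat_service_measurable, where t=t, symmetric]
    by (rule real_cond_exp_indep_mult[OF indep_queue_X]) (auto intro: integrable_stat_service_X)
  moreover have "AE \<omega> in M. \<forall>k\<in>UNIV. real_cond_exp M F (\<lambda>\<omega>. queue t \<omega> k * stat_energy (X t \<omega>)) \<omega>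
      = queue t \<omega> k * mean_stat_energy"
    unfolding AE_finite_all[OF finite] F_def mean_stat_energy_def
      integral_X_eq[OF stat_energy_measurable, where t=t, symmetric]
    by (intro ballI real_cond_exp_indep_mult[OF indep_queue_X] integrable_queue integrable_stat_energy_X) measurable
  moreover have "AE \<omega> in M. real_cond_exp M F (\<lambda>\<omega>. \<Sum>k\<in>UNIV. queue t \<omega> k * stat_energy (X t \<omega>)) \<omega>
      = (\<Sum>k\<in>UNIV. real_cond_exp M F (\<lambda>\<omega>. queue t \<omega> k * stat_energy (X t \<omega>)) \<omega>)"
    by (rule F.real_cond_exp_sum[OF integrable_queue_stat_energy])
  moreover have "AE \<omega> in M. real_cond_exp M F (\<lambda>\<omega>. c \<omega> - V * stat_service (X t \<omega>)) \<omega>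
      = real_cond_exp M F c \<omega> - real_cond_exp M F (\<lambda>\<omega>. V * stat_service (X t \<omega>)) \<omega>"
    using int_c integrable_stat_service_X by (intro F.real_cond_exp_diff) auto
  moreover have "AE \<omega> in M. real_cond_exp M F (\<lambda>\<omega>. V * stat_service (X t \<omega>)) \<omega>
      = V * real_cond_exp M F (\<lambda>\<omega>. stat_service (X t \<omega>)) \<omega>"
    by (rule F.real_cond_exp_cmult[OF integrable_stat_service_X])
  moreover have "AE \<omega> in M. real_cond_exp M F (\<lambda>\<omega>. (c \<omega> - V * stat_service (X t \<omega>))
        + (\<Sum>k\<in>UNIV. queue t \<omega> k * stat_energy (X t \<omega>))) \<omega>
      = real_cond_exp M F (\<lambda>\<omega>. c \<omega> - V * stat_service (X t \<omega>)) \<omega>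
        + real_cond_exp M F (\<lambda>\<omega>. \<Sum>k\<in>UNIV. queue t \<omega> k * stat_energy (X t \<omega>)) \<omega>"
    using int_c integrable_stat_service_X integrable_queue_stat_energy by (intro F.real_cond_exp_add) auto
  ultimately show ?thesis
    unfolding F_def[symmetric] c_def[symmetric] by eventually_elim simp
qed

lemma cond_drift_plus_penalty_le:
  "AE \<omega> in M.
      real_cond_exp M (vimage_algebra (space M) (queue t) vspace)
        (\<lambda>\<omega>. Lyap (queue (Suc t) \<omega>) - Lyap (queue t \<omega>)) \<omega>
    - V * real_cond_exp M (vimage_algebra (space M) (queue t) vspace) (service t) \<omega>
    \<le> drift_const - \<epsilon> * (\<Sum>k\<in>UNIV. queue t \<omega> k) - V * opt_service"
proof -
  define F where "F = vimage_algebra (space M) (queue t) vspace"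
  interpret F: finite_measure_subalgebra M F
    unfolding F_def by (rule finite_measure_subalgebra_queue)
  let ?drift = "\<lambda>\<omega>. Lyap (queue (Suc t) \<omega>) - Lyap (queue t \<omega>)"
  let ?bound = "\<lambda>\<omega>. drift_const - (\<Sum>k\<in>UNIV. queue t \<omega> k * Etot k)
    - V * stat_service (X t \<omega>) + (\<Sum>k\<in>UNIV. queue t \<omega> k * stat_energy (X t \<omega>))"
  have int_drift: "integrable M ?drift"
    using integrable_Lyap_queue by auto
  have int_bound: "integrable M ?bound"
    using integrable_queue integrable_stat_service_X integrable_queue_stat_energy by auto
  have energy_slack: "drift_const - (\<Sum>k\<in>UNIV. queue t \<omega> k * Etot k)
         - V * opt_service + (\<Sum>k\<in>UNIV. queue t \<omega> k * mean_stat_energy)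
      \<le> drift_const - \<epsilon> * (\<Sum>k\<in>UNIV. queue t \<omega> k) - V * opt_service" for \<omega>
  proof -
    have "(\<Sum>k\<in>UNIV. queue t \<omega> k * \<epsilon>) \<le> (\<Sum>k\<in>UNIV. queue t \<omega> k * (Etot k - mean_stat_energy))"
      using mean_stat_energy_le queue_nonneg by (intro sum_mono mult_left_mono) (auto simp: algebra_simps)
    moreover have "(\<Sum>k\<in>UNIV. queue t \<omega> k * (Etot k - mean_stat_energy))
        = (\<Sum>k\<in>UNIV. queue t \<omega> k * Etot k) - (\<Sum>k\<in>UNIV. queue t \<omega> k * mean_stat_energy)"
      by (simp add: right_diff_distrib sum_subtractf)
    moreover have "(\<Sum>k\<in>UNIV. queue t \<omega> k * \<epsilon>) = \<epsilon> * (\<Sum>k\<in>UNIV. queue t \<omega> k)"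
      by (simp add: sum_distrib_left mult.commute)
    ultimately show ?thesis by linarith
  qed
  have "AE \<omega> in M. real_cond_exp M F (\<lambda>\<omega>. ?drift \<omega> - V * service t \<omega>) \<omega>
      = real_cond_exp M F ?drift \<omega> - real_cond_exp M F (\<lambda>\<omega>. V * service t \<omega>) \<omega>"
    using int_drift integrable_service by (intro F.real_cond_exp_diff) auto
  moreover have "AE \<omega> in M. real_cond_exp M F (\<lambda>\<omega>. V * service t \<omega>) \<omega>
      = V * real_cond_exp M F (service t) \<omega>"
    by (rule F.real_cond_exp_cmult[OF integrable_service])
  moreover have "AE \<omega> in M. real_cond_exp M F (\<lambda>\<omega>. ?drift \<omega> - V * service t \<omega>) \<omega>
      \<le> real_cond_exp M F ?bound \<omega>"
    using int_drift integrable_service int_bound drift_plus_penalty_le_stationary[unfolded sum_distrib_right]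
    by (intro F.real_cond_exp_mono AE_I2) auto
  moreover have "AE \<omega> in M. real_cond_exp M F ?bound \<omega>
      = drift_const - (\<Sum>k\<in>UNIV. queue t \<omega> k * Etot k)
         - V * opt_service + (\<Sum>k\<in>UNIV. queue t \<omega> k * mean_stat_energy)"
    unfolding F_def by (rule real_cond_exp_stationary_bound)
  ultimately have "AE \<omega> in M. real_cond_exp M F ?drift \<omega> - V * real_cond_exp M F (service t) \<omega>
      \<le> drift_const - (\<Sum>k\<in>UNIV. queue t \<omega> k * Etot k)
         - V * opt_service + (\<Sum>k\<in>UNIV. queue t \<omega> k * mean_stat_energy)"
    by eventually_elim linarith
  then show ?thesis
    unfolding F_def[symmetric] by eventually_elim (rule order_trans[OF _ energy_slack])
qed

lemma expected_drift_plus_penalty_le: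
  "(\<integral>\<omega>. Lyap (queue (Suc t) \<omega>) \<partial>M) - (\<integral>\<omega>. Lyap (queue t \<omega>) \<partial>M) - V * (\<integral>\<omega>. service t \<omega> \<partial>M)
    \<le> drift_const - \<epsilon> * (\<Sum>k\<in>UNIV. \<integral>\<omega>. queue t \<omega> k \<partial>M) - V * opt_service"
proof -
  define F where "F = vimage_algebra (space M) (queue t) vspace"
  interpret F: finite_measure_subalgebra M F
    unfolding F_def by (rule finite_measure_subalgebra_queue)
  let ?drift = "\<lambda>\<omega>. Lyap (queue (Suc t) \<omega>) - Lyap (queue t \<omega>)"
  have int_drift: "integrable M ?drift"
    using integrable_Lyap_queue by auto
  have "(\<integral>\<omega>. Lyap (queue (Suc t) \<omega>) \<partial>M) - (\<integral>\<omega>. Lyap (queue t \<omega>) \<partial>M) - V * (\<integral>\<omega>. service t \<omega> \<partial>M)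
      = (\<integral>\<omega>. real_cond_exp M F ?drift \<omega> - V * real_cond_exp M F (service t) \<omega> \<partial>M)"
    using F.real_cond_exp_int[OF int_drift] F.real_cond_exp_int[OF integrable_service] integrable_Lyap_queue
    by simp
  also have "\<dots> \<le> (\<integral>\<omega>. drift_const - \<epsilon> * (\<Sum>k\<in>UNIV. queue t \<omega> k) - V * opt_service \<partial>M)"
    using cond_drift_plus_penalty_le[of t] F.real_cond_exp_int[OF int_drift]
      F.real_cond_exp_int[OF integrable_service] integrable_queue
    unfolding F_def[symmetric] by (intro integral_mono_AE) auto
  also have "\<dots> = drift_const - \<epsilon> * (\<Sum>k\<in>UNIV. \<integral>\<omega>. queue t \<omega> k \<partial>M) - V * opt_service"
    using integrable_queue by (simp add: Bochner_Integration.integral_sum prob_space)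
  finally show ?thesis .
qed

lemma time_average_bounds:
  shows "limsup (\<lambda>T. ereal (1 / real T * (\<Sum>t<T. \<Sum>k\<in>UNIV. \<integral>\<omega>. queue t \<omega> k \<partial>M)))
      \<le> ereal ((drift_const + V * real CARD('k)) / \<epsilon>)"
    and "ereal opt_service - ereal (drift_const / V)
      \<le> liminf (\<lambda>T. ereal (1 / real T * (\<Sum>t<T. \<integral>\<omega>. service t \<omega> \<partial>M)))"
proof -
  have "0 \<le> opt_service"
    unfolding opt_service_def by (simp add: stat_service_bounds)
  moreover have "(\<integral>\<omega>. service t \<omega> \<partial>M) \<le> real CARD('k)" for t
    using integrable_service by (intro integral_le_const) (auto simp: Stot_le_card)
  moreover have "0 \<le> (\<Sum>k\<in>UNIV. \<integral>\<omega>. queue t \<omega> k \<partial>M)" for t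
    by (intro sum_nonneg integral_nonneg_AE) (simp add: queue_nonneg)
  moreover have "0 \<le> (\<integral>\<omega>. Lyap (queue t \<omega>) \<partial>M)" for t
    by (intro integral_nonneg_AE) (simp add: Lyap_def sum_nonneg)
  moreover have "(\<integral>\<omega>. Lyap (queue 0 \<omega>) \<partial>M) = 0"
    by (simp add: queue_def Lyap_def)
  ultimately show "limsup (\<lambda>T. ereal (1 / real T * (\<Sum>t<T. \<Sum>k\<in>UNIV. \<integral>\<omega>. queue t \<omega> k \<partial>M)))
      \<le> ereal ((drift_const + V * real CARD('k)) / \<epsilon>)"
    and "ereal opt_service - ereal (drift_const / V)
      \<le> liminf (\<lambda>T. ereal (1 / real T * (\<Sum>t<T. \<integral>\<omega>. service t \<omega> \<partial>M)))"
    using drift_plus_penalty_time_averages[where L="\<lambda>t. \<integral>\<omega>. Lyap (queue t \<omega>) \<partial>M"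
        and p="\<lambda>t. \<integral>\<omega>. service t \<omega> \<partial>M" and pmax="real CARD('k)" and q="\<lambda>t. \<Sum>k\<in>UNIV. \<integral>\<omega>. queue t \<omega> k \<partial>M",
        OF _ _ expected_drift_plus_penalty_le _ _ V eps]
    by auto
qed

end

theorem theorem2:
  fixes M :: "'a measure"
    and X :: "nat \<Rightarrow> 'a \<Rightarrow> ('k::finite \<Rightarrow> real)"
    and D :: "('k \<Rightarrow> real) measure"
    and P V Tmax \<epsilon> :: real
    and Etot :: "'k \<Rightarrow> real"
    and \<kappa> :: "('k \<Rightarrow> real) \<Rightarrow> real measure"
    and sel :: "nat \<Rightarrow> ('k \<Rightarrow> real) \<Rightarrow> ('k \<Rightarrow> real) \<Rightarrow> real"
    and Y :: "nat \<Rightarrow> 'a \<Rightarrow> 'k \<Rightarrow> real"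
    and Sstar B2 :: "_"
  assumes M: "prob_space M"
    and X_meas: "\<And>t. X t \<in> M \<rightarrow>\<^sub>M vspace"
    and X_indep: "prob_space.indep_vars M (\<lambda>_. vspace) X UNIV"
    and X_distr: "\<And>t. distr M vspace (X t) = D"
    and X_nonneg: "\<And>t \<omega> k. \<omega> \<in> space M \<Longrightarrow> 0 \<le> X t \<omega> k"
    and V: "V > 0" and P: "P > 0" and Tmax: "0 \<le> Tmax"
    and Etot: "\<And>k. Etot k > 0"
    and eps: "\<epsilon> > 0"
    and Sstar_def: "Sstar \<equiv> opt_Stot M X P Tmax Etot"
    and \<kappa>_meas: "\<kappa> \<in> D \<rightarrow>\<^sub>M prob_algebra borel"
    and \<kappa>_range: "\<And>x. AE ts in \<kappa> x. 0 \<le> ts \<and> ts \<le> Tmax"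
    and stat_S: "ereal (\<integral>x. (\<integral>ts. Stot ts x \<partial>\<kappa> x) \<partial>D) = Sstar"
    and stat_E: "\<And>k. (\<integral>x. (\<integral>ts. ts * P \<partial>\<kappa> x) \<partial>D) \<le> Etot k - \<epsilon>"
    and sel_range: "\<And>t x y. 0 \<le> sel t x y \<and> sel t x y \<le> Tmax"
    and sel_max: "\<And>t x y ts. 0 \<le> ts \<Longrightarrow> ts \<le> Tmax \<Longrightarrow> ead_obj V P x y ts \<le> ead_obj V P x y (sel t x y)"
    and sel_meas: "\<And>t. (\<lambda>(x, y). sel t x y) \<in> borel_measurable (vspace \<Otimes>\<^sub>M vspace)"
    and Y_def: "Y \<equiv> (\<lambda>t \<omega>. ead_Y P Etot sel (\<lambda>s. X s \<omega>) t)"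
    and B2_def: "B2 \<equiv> 1/2 * real CARD('k) * ((Tmax * P)^2 + (Max (range Etot))^2)"
  shows "(\<forall>t. AE \<omega> in M.
            real_cond_exp M (vimage_algebra (space M) (Y t) vspace)
               (\<lambda>\<omega>. Lyap (Y (Suc t) \<omega>) - Lyap (Y t \<omega>)) \<omega>
          - V * real_cond_exp M (vimage_algebra (space M) (Y t) vspace)
               (\<lambda>\<omega>. Stot (sel t (X t \<omega>) (Y t \<omega>)) (X t \<omega>)) \<omega>
          \<le> B2 - \<epsilon> * (\<Sum>k\<in>UNIV. Y t \<omega> k) - V * real_of_ereal Sstar)
      \<and> limsup (\<lambda>T. ereal (1 / real T * (\<Sum>t<T. \<Sum>k\<in>UNIV. (\<integral>\<omega>. Y t \<omega> k \<partial>M))))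
          \<le> ereal ((B2 + V * real CARD('k)) / \<epsilon>)
      \<and> liminf (\<lambda>T. ereal (1 / real T * (\<Sum>t<T. (\<integral>\<omega>. Stot (sel t (X t \<omega>) (Y t \<omega>)) (X t \<omega>) \<partial>M))))
          \<ge> Sstar - ereal (B2 / V)"
proof -
  interpret S: ead_ppdu M X D P V Tmax \<epsilon> Etot \<kappa> sel
    by (intro ead_ppdu.intro ead_ppdu_axioms.intro)
       (use M X_meas X_indep X_distr V P Etot eps \<kappa>_meas \<kappa>_range stat_E sel_range sel_max sel_meas in auto)
  have "Y = S.queue"
    by (simp add: Y_def S.queue_def[abs_def])
  moreover have "B2 = S.drift_const"
    by (simp add: B2_def S.drift_const_def)
  moreover have "Sstar = ereal S.opt_service"
    using stat_S by (simp add: S.opt_service_def S.stat_service_def)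
  ultimately show ?thesis
    using S.cond_drift_plus_penalty_le S.time_average_bounds by simp
qed

end
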